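(* Let $H\in\mathbb{C}^{M\times M}$ and $\mathbf{z}\in\mathbb{C}^{M}$ be as defined in the context. Then $0$ is a simple eigenvalue of $H$ with a corresponding eigenvector $\mathbf{z}$ if and only if the localization interaction graph $\mathcal{G}'$ has an oriented spanning tree. Further, every nonzero eigenvalue of $H$ has strictly negative real part.
   Context: Setting. There are $N$ agents $\mathcal{V}=\{1,\dots,N\}$ at distinct positions $\mathbf{p}_u\in\mathbb{R}^2$. The bearing vector is $\mathbf{g}_{vu}=(\mathbf{p}_v-\mathbf{p}_u)/\|\mathbf{p}_v-\mathbf{p}_u\|$ and $\angle\mathbf{g}_{vu}\in[-\pi,\pi)$ its angle in a fixed global frame. For distinct agents $u,v,w$, $\alpha^{u}_{wv}\in[-\pi,\pi)$ denotes the counterclockwise angle at $u$ from $\mathbf{g}_{vu}$ to $\mathbf{g}_{wu}$. A set $\mathcal{S}$ of measured subtended angles is given, with $\alpha^{u}_{wv}\in\mathcal{S}$ iff $\alpha^{u}_{vw}\in\mathcal{S}$. Standing assumption: if an agent measures subtended angles between two or more pairs of other agents, all bearing vectors associated with these measurements are related to each other through them (so that the subtended angle at that agent between any two of these agents is determined by its measurements). The communication graph $\mathcal{G}=(\mathcal{V},\mathcal{E})$ has as edges exactly the ordered pairs $(u,v),(v,u),(u,w),(w,u)$ for all $\alpha^{u}_{wv}\in\mathcal{S}$; it is symmetric and assumed connected. Edge localization graph $\bar{\mathcal{G}}=(\bar{\mathcal{V}},\bar{\mathcal{E}})$: for each $(u,v)\in\mathcal{E}$ with no $w$ such that $\alpha^{v}_{wu}\in\mathcal{S}$,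 introduce a new virtual vertex $\bar v^{u}$ (distinct for distinct such pairs), co-located with agent $v$; $\bar{\mathcal{E}}$ is obtained from $\mathcal{E}$ by replacing each such pair $(u,v),(v,u)$ by $(u,\bar v^{u}),(\bar v^{u},u)$; $\bar{\mathcal{V}}$ consists of the agents that measure at least one subtended angle together with all virtual vertices. For $a\in\bar{\mathcal{V}}$ let $\rho(a)$ be the real agent it is (co-located with): $\rho(\bar v^u)=v$, $\rho(v)=v$. The directed line graph $L(\bar{\mathcal{G}})$ has vertex set $\bar{\mathcal{E}}$ and an edge $(e_1,e_2)$ whenever the head of $e_1$ equals the tail of $e_2$. The localization interaction graph $\mathcal{G}'=(\mathcal{V}',\mathcal{E}')$ is $L(\bar{\mathcal{G}})$ with vertices relabelled by a bijection onto $\mathcal{V}'=\{1,\dots,M\}$, $M=|\bar{\mathcal{E}}|$; vertex $k$ corresponding to $(a,b)\in\bar{\mathcal{E}}$ is the edge agent $k$; its neighbor set is $\mathcal{N}_k=\{j:(k,j)\in\mathcal{E}'\}$. For edge agent $k$ corresponding to $(a,b)$ set $\theta_k=\angle\mathbf{g}_{\rho(b)\rho(a)}$ and $z_k=e^{\mathrm{i}\theta_k}$, $\mathbf{z}=[z_1,\dots,z_M]^T$. For $j\in\mathcal{N}_k$ with $j$ corresponding to $(b,c)$, write $u=\rho(a)$, $v=\rho(b)$, $w=\rho(c)$ and set $\theta_{jk}=\mathrm{PV}(\alpha^{v}_{wu}+\pi)$ if $w\neq u$ and $\theta_{jk}=-\pi$ if $w=u$, where $\mathrm{PV}(\theta)=[(\theta+\pi)\bmod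 2\pi]-\pi$. The matrix $H$ has entries $[H]_{kk}=-|\mathcal{N}_k|$, $[H]_{kj}=e^{-\mathrm{i}\theta_{jk}}$ if $j\in\mathcal{N}_k$, and $0$ otherwise. An oriented spanning tree of a directed graph with root $r$ is an acyclic subgraph containing all vertices in which every vertex other than $r$ has a directed path to $r$. *)

theory Defs
  imports Complex_Main "Jordan_Normal_Form.Char_Poly"
begin

text \<open>Agents are natural numbers; positions in the plane are complex numbers
  (R^2 identified with C). A measured subtended angle alpha^u_{wv} in S is encoded by the
  triple (u, w, v) in the set S.\<close>

definition pv :: "real \<Rightarrow> real" where
  "pv \<theta> = ((\<theta> + pi) - 2 * pi * of_int \<lfloor>(\<theta> + pi) / (2 * pi)\<rfloor>) - pi"

text \<open>Angle (in [-pi,pi)) of the bearing vector g_{vu} = (p v - p u)/|p v - p u|.\<close>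
definition bearing_angle :: "(nat \<Rightarrow> complex) \<Rightarrow> nat \<Rightarrow> nat \<Rightarrow> real" where
  "bearing_angle p v u = pv (Arg ((p v - p u) / of_real (cmod (p v - p u))))"

text \<open>alpha^u_{wv}: counterclockwise angle at u from g_{vu} to g_{wu}, in [-pi,pi).\<close>
definition subt_angle :: "(nat \<Rightarrow> complex) \<Rightarrow> nat \<Rightarrow> nat \<Rightarrow> nat \<Rightarrow> real" where
  "subt_angle p u w v = pv (bearing_angle p w u - bearing_angle p v u)"

definition comm_edges :: "(nat \<times> nat \<times> nat) set \<Rightarrow> (nat \<times> nat) set" where
  "comm_edges S = {e. \<exists>u w v. (u, w, v) \<in> S \<and>
      (e = (u, v) \<or> e = (v, u) \<or> e = (u, w) \<or> e = (w, u))}"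

definition standing_assumption :: "(nat \<times> nat \<times> nat) set \<Rightarrow> bool" where
  "standing_assumption S \<longleftrightarrow> (\<forall>u v w v' w'. (u, w, v) \<in> S \<longrightarrow> (u, w', v') \<in> S \<longrightarrow>
      (v, v') \<in> {(x, y). (u, y, x) \<in> S}\<^sup>*)"

text \<open>Vertices of the edge localization graph: real agents or virtual vertices.
  Virt u v stands for the virtual vertex bar v^u, co-located with agent v.\<close>
datatype vbar = Real nat | Virt nat nat

fun rho :: "vbar \<Rightarrow> nat" where
  "rho (Real v) = v"
| "rho (Virt u v) = v"

definition needs_virtual :: "(nat \<times> nat \<times> nat) set \<Rightarrow> nat \<Rightarrow> nat \<Rightarrow> bool" where
  "needs_virtual S u v \<longleftrightarrow> (u, v) \<in> comm_edges S \<and> \<not> (\<exists>w. (v, w, u) \<in> S)"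

definition loc_edges :: "(nat \<times> nat \<times> nat) set \<Rightarrow> (vbar \<times> vbar) set" where
  "loc_edges S =
     {(Real u, Real v) | u v. (u, v) \<in> comm_edges S \<and>
         \<not> needs_virtual S u v \<and> \<not> needs_virtual S v u}
   \<union> {(Real u, Virt u v) | u v. needs_virtual S u v}
   \<union> {(Virt u v, Real u) | u v. needs_virtual S u v}"

text \<open>Localization interaction graph G' on {0..<M}, obtained from the directed line graph
  of the edge localization graph through the labelling lab : {0..<M} -> edges.\<close>
definition lig_edges :: "nat \<Rightarrow> (nat \<Rightarrow> vbar \<times> vbar) \<Rightarrow> (nat \<times> nat) set" where
  "lig_edges M lab = {(k, j). k < M \<and> j < M \<and> snd (lab k) = fst (lab j)}"

definition lig_nbrs :: "nat \<Rightarrow> (nat \<Rightarrow> vbar \<times> vbar) \<Rightarrow> nat \<Rightarrow> nat set" where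
  "lig_nbrs M lab k = {j. (k, j) \<in> lig_edges M lab}"

definition theta_e :: "(nat \<Rightarrow> complex) \<Rightarrow> (nat \<Rightarrow> vbar \<times> vbar) \<Rightarrow> nat \<Rightarrow> real" where
  "theta_e p lab k = bearing_angle p (rho (snd (lab k))) (rho (fst (lab k)))"

definition zvec :: "(nat \<Rightarrow> complex) \<Rightarrow> nat \<Rightarrow> (nat \<Rightarrow> vbar \<times> vbar) \<Rightarrow> complex vec" where
  "zvec p M lab = vec M (\<lambda>k. cis (theta_e p lab k))"

definition theta_jk :: "(nat \<Rightarrow> complex) \<Rightarrow> (nat \<Rightarrow> vbar \<times> vbar) \<Rightarrow> nat \<Rightarrow> nat \<Rightarrow> real" where
  "theta_jk p lab j k =
     (let u = rho (fst (lab k)); v = rho (snd (lab k)); w = rho (snd (lab j))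
      in if w \<noteq> u then pv (subt_angle p v w u + pi) else - pi)"

definition Hmat :: "(nat \<Rightarrow> complex) \<Rightarrow> nat \<Rightarrow> (nat \<Rightarrow> vbar \<times> vbar) \<Rightarrow> complex mat" where
  "Hmat p M lab = mat M M (\<lambda>(k, j).
      if k = j then - of_nat (card (lig_nbrs M lab k))
      else if j \<in> lig_nbrs M lab k then cis (- theta_jk p lab j k) else 0)"

definition has_oriented_spanning_tree :: "'a set \<Rightarrow> ('a \<times> 'a) set \<Rightarrow> bool" where
  "has_oriented_spanning_tree Vs Es \<longleftrightarrow>
     (\<exists>r \<in> Vs. \<exists>T \<subseteq> Es. acyclic T \<and> (\<forall>v \<in> Vs. v \<noteq> r \<longrightarrow> (v, r) \<in> T\<^sup>+))"

end

theory Submission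
  imports Defs "Jordan_Normal_Form.Jordan_Normal_Form_Uniqueness" "Jordan_Normal_Form.Jordan_Normal_Form_Existence"
begin

text \<open>Along every edge (k, j) of the localization interaction graph G' the phases satisfy
  e^(-i theta_jk) z_j = z_k. Writing x_k = z_k y_k therefore turns H x into z times L y, where
  (L y)_k = sum over j in N_k of (y_j - y_k) is the (negated) Laplacian of G'. Gershgorin's
  disc argument puts every nonzero eigenvalue into the open left half plane. If G' has a root r,
  i.e. a vertex reachable from all others, a maximum principle shows that L y = 0 forces y to be
  constant and that L (L y) = 0 forces L y = 0; so the kernel of H^2 is spanned by z and the
  Jordan form makes 0 a simple eigenvalue. Otherwise there are two disjoint nonempty vertex sets
  closed under out-edges; each carries a left null vector of H, so 0 has geometric multiplicity
  at least 2 for the transpose of H and hence algebraic multiplicity at least 2.\<close>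

hide_const (open) Coset.order

section \<open>Phases of bearing vectors\<close>

lemma cis_pv [simp]: "cis (pv x) = cis x"
proof -
  have "pv x = x + 2 * pi * of_int (- \<lfloor>(x + pi) / (2 * pi)\<rfloor>)"
    unfolding pv_def by simp
  then show ?thesis
    by (simp only: cis_mult[symmetric] cis_multiple_2pi[OF Ints_of_int] mult_1_right)
qed

lemma cis_bearing_angle: "p a \<noteq> p b \<Longrightarrow> cis (bearing_angle p a b) = sgn (p a - p b)"
  unfolding bearing_angle_def cis_pv by (subst cis_Arg) (auto simp: sgn_eq norm_divide)

text \<open>Rotating g_wv by -(alpha^v_wu + pi) gives -g_uv = g_vu; for w = u the rotation is by pi.\<close>

lemma cis_bearing_angle_transport:
  assumes "p u \<noteq> p v" "p w \<noteq> p v"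
  shows "cis (- (if w \<noteq> u then pv (subt_angle p v w u + pi) else - pi)) * cis (bearing_angle p w v)
         = cis (bearing_angle p v u)"
proof -
  have opposite: "sgn (p u - p v) = - sgn (p v - p u)"
    by (metis minus_diff_eq sgn_minus)
  show ?thesis
  proof (cases "w = u")
    case True
    then show ?thesis using assms opposite by (simp add: cis_bearing_angle)
  next
    case False
    have "cis (- pv (subt_angle p v w u + pi)) = - cis (bearing_angle p u v) / cis (bearing_angle p w v)"
      by (simp add: subt_angle_def cis_inverse[symmetric] cis_mult[symmetric] cis_divide[symmetric]
          del: cis_inverse)
    then have "cis (- pv (subt_angle p v w u + pi)) * cis (bearing_angle p w v) = - cis (bearing_angle p u v)"
      by simp
    then show ?thesis using False assms opposite by (simp add: cis_bearing_angle)
  qed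
qed

section \<open>A maximum principle for graph Laplacians\<close>

definition graph_lap :: "('v \<Rightarrow> 'v set) \<Rightarrow> ('v \<Rightarrow> 'a::ab_group_add) \<Rightarrow> 'v \<Rightarrow> 'a" where
  "graph_lap nb y k = (\<Sum>j\<in>nb k. y j - y k)"

lemma graph_lap_uminus: "graph_lap nb (\<lambda>i. - y i) k = - graph_lap nb y k"
  unfolding graph_lap_def by (simp add: sum_negf[symmetric])

lemma Re_graph_lap: "Re (graph_lap nb y k) = graph_lap nb (\<lambda>i. Re (y i)) k"
  unfolding graph_lap_def by (simp add: Re_sum)

lemma Im_graph_lap: "Im (graph_lap nb y k) = graph_lap nb (\<lambda>i. Im (y i)) k"
  unfolding graph_lap_def by (simp add: Im_sum)

lemma finite_has_max:
  fixes f :: "'v \<Rightarrow> 'b::linorder"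
  assumes "finite V" "V \<noteq> {}"
  shows "\<exists>m\<in>V. \<forall>j\<in>V. f j \<le> f m"
proof -
  have "Max (f ` V) \<in> f ` V" using assms by simp
  then obtain m where m: "m \<in> V" "f m = Max (f ` V)" by auto
  have "\<forall>j\<in>V. f j \<le> f m" unfolding m(2) using assms(1) by simp
  then show ?thesis using m(1) by blast
qed

lemma graph_lap_nonpos_at_max:
  fixes f :: "'v \<Rightarrow> real"
  assumes "nb k \<subseteq> V" "\<forall>j\<in>V. f j \<le> f k"
  shows "graph_lap nb f k \<le> 0"
  unfolding graph_lap_def using assms by (intro sum_nonpos) auto

lemma harmonic_at_max_imp_nbr_max:
  fixes g :: "'v \<Rightarrow> real"
  assumes "finite (nb i)" "graph_lap nb g i = 0" "\<forall>j\<in>nb i. g j \<le> g i" "j \<in> nb i"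
  shows "g j = g i"
proof -
  have "(\<Sum>j\<in>nb i. g i - g j) = - graph_lap nb g i"
    unfolding graph_lap_def by (simp add: sum_negf[symmetric])
  then have "(\<Sum>j\<in>nb i. g i - g j) = 0" using assms(2) by simp
  then have "\<forall>j\<in>nb i. g i - g j = 0"
    using sum_nonneg_eq_0_iff[OF assms(1), of "\<lambda>j. g i - g j"] assms(3) by simp
  then show ?thesis using assms(4) by simp
qed

text \<open>Maximum principle: the maximum spreads from a maximal vertex along all out-edges,
  hence reaches the root.\<close>

lemma harmonic_max_at_root:
  fixes g :: "'v \<Rightarrow> real"
  assumes V: "finite V" and nb: "\<And>k. k \<in> V \<Longrightarrow> nb k \<subseteq> V"
    and harmonic: "\<And>k. k \<in> V \<Longrightarrow> graph_lap nb g k = 0"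
    and r: "r \<in> V" and root: "\<And>v. v \<in> V \<Longrightarrow> v \<noteq> r \<Longrightarrow> (v, r) \<in> {(a, b). b \<in> nb a}\<^sup>+"
    and k: "k \<in> V"
  shows "g k \<le> g r"
proof -
  obtain m where m: "m \<in> V" and max: "\<forall>j\<in>V. g j \<le> g m"
    using finite_has_max[OF V, of g] r by blast
  have spread: "j \<in> V \<and> g j = g m" if "i \<in> V" "g i = g m" "j \<in> nb i" for i j
  proof -
    have fin: "finite (nb i)" using nb[OF that(1)] V by (rule finite_subset)
    have "\<forall>j\<in>nb i. g j \<le> g i" using nb[OF that(1)] max that(2) by auto
    then have "g j = g i" by (rule harmonic_at_max_imp_nbr_max[OF fin harmonic[OF that(1)] _ that(3)])
    then show ?thesis using nb[OF that(1)] that by auto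
  qed
  have reach_max: "i \<in> V \<and> g i = g m" if "(m, i) \<in> {(a, b). b \<in> nb a}\<^sup>+" for i
    using that
  proof (induction rule: trancl_induct)
    case (base j)
    then have "j \<in> nb m" by simp
    then show ?case by (rule spread[OF m refl])
  next
    case (step i j)
    then have "i \<in> V" "g i = g m" "j \<in> nb i" by simp_all
    then show ?case by (rule spread)
  qed
  have "g r = g m"
  proof (cases "m = r")
    case False
    then show ?thesis using reach_max root[OF m False] by blast
  qed simp
  then show ?thesis using max k by simp
qed

lemma harmonic_const_real:
  fixes g :: "'v \<Rightarrow> real"
  assumes V: "finite V" and nb: "\<And>k. k \<in> V \<Longrightarrow> nb k \<subseteq> V"
    and harmonic: "\<And>k. k \<in> V \<Longrightarrow> graph_lap nb g k = 0"
    and r: "r \<in> V" and root: "\<And>v. v \<in> V \<Longrightarrow> v \<noteq> r \<Longrightarrow> (v, r) \<in> {(a, b). b \<in> nb a}\<^sup>+"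
    and k: "k \<in> V"
  shows "g k = g r"
proof -
  have "graph_lap nb (\<lambda>i. - g i) k = 0" if "k \<in> V" for k
    using harmonic[OF that] by (simp add: graph_lap_uminus)
  then have "- g k \<le> - g r"
    using harmonic_max_at_root[of V nb "\<lambda>i. - g i", OF V nb _ r root k] by blast
  moreover have "g k \<le> g r" using harmonic_max_at_root[OF V nb harmonic r root k] .
  ultimately show ?thesis by simp
qed

lemma harmonic_const:
  fixes y :: "'v \<Rightarrow> complex"
  assumes V: "finite V" and nb: "\<And>k. k \<in> V \<Longrightarrow> nb k \<subseteq> V"
    and harmonic: "\<And>k. k \<in> V \<Longrightarrow> graph_lap nb y k = 0"
    and r: "r \<in> V" and root: "\<And>v. v \<in> V \<Longrightarrow> v \<noteq> r \<Longrightarrow> (v, r) \<in> {(a, b). b \<in> nb a}\<^sup>+"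
    and k: "k \<in> V"
  shows "y k = y r"
proof (rule complex_eqI)
  show "Re (y k) = Re (y r)"
  proof (rule harmonic_const_real[OF V nb _ r root k])
    fix i assume "i \<in> V"
    then show "graph_lap nb (\<lambda>i. Re (y i)) i = 0" using Re_graph_lap[of nb y i] harmonic by simp
  qed
  show "Im (y k) = Im (y r)"
  proof (rule harmonic_const_real[OF V nb _ r root k])
    fix i assume "i \<in> V"
    then show "graph_lap nb (\<lambda>i. Im (y i)) i = 0" using Im_graph_lap[of nb y i] harmonic by simp
  qed
qed

lemma graph_lap_const_eq_0:
  fixes f :: "'v \<Rightarrow> real"
  assumes V: "finite V" "V \<noteq> {}" and nb: "\<And>k. k \<in> V \<Longrightarrow> nb k \<subseteq> V"
    and const: "\<And>k. k \<in> V \<Longrightarrow> graph_lap nb f k = c"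
  shows "c = 0"
proof -
  obtain k0 where k0: "k0 \<in> V" "\<forall>j\<in>V. f j \<le> f k0"
    using finite_has_max[OF V, of f] by blast
  have "c = graph_lap nb f k0" using const[OF k0(1)] by simp
  also have "\<dots> \<le> 0" by (rule graph_lap_nonpos_at_max[of nb k0 V f, OF nb[OF k0(1)] k0(2)])
  finally have "c \<le> 0" .
  obtain k1 where k1: "k1 \<in> V" "\<forall>j\<in>V. - f j \<le> - f k1"
    using finite_has_max[OF V, of "\<lambda>i. - f i"] by blast
  have "- c = graph_lap nb (\<lambda>i. - f i) k1" using const[OF k1(1)] by (simp add: graph_lap_uminus)
  also have "\<dots> \<le> 0" by (rule graph_lap_nonpos_at_max[of nb k1 V "\<lambda>i. - f i", OF nb[OF k1(1)] k1(2)])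
  finally show ?thesis using \<open>c \<le> 0\<close> by simp
qed

text \<open>If L (L y) = 0, then L y is constant by the maximum principle, and a Laplacian cannot
  be a nonzero constant since it is nonpositive at a maximum.\<close>

lemma biharmonic_const:
  fixes y :: "'v \<Rightarrow> complex"
  assumes V: "finite V" and nb: "\<And>k. k \<in> V \<Longrightarrow> nb k \<subseteq> V"
    and biharmonic: "\<And>k. k \<in> V \<Longrightarrow> graph_lap nb (graph_lap nb y) k = 0"
    and r: "r \<in> V" and root: "\<And>v. v \<in> V \<Longrightarrow> v \<noteq> r \<Longrightarrow> (v, r) \<in> {(a, b). b \<in> nb a}\<^sup>+"
    and k: "k \<in> V"
  shows "y k = y r"
proof -
  have const: "graph_lap nb y i = graph_lap nb y r" if "i \<in> V" for i
    by (rule harmonic_const[OF V nb biharmonic r root that])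
  have "V \<noteq> {}" using r by blast
  have "Re (graph_lap nb y r) = 0"
  proof (rule graph_lap_const_eq_0[OF V \<open>V \<noteq> {}\<close> nb])
    fix i assume "i \<in> V"
    then show "graph_lap nb (\<lambda>i. Re (y i)) i = Re (graph_lap nb y r)"
      using Re_graph_lap[of nb y i] const by simp
  qed
  moreover have "Im (graph_lap nb y r) = 0"
  proof (rule graph_lap_const_eq_0[OF V \<open>V \<noteq> {}\<close> nb])
    fix i assume "i \<in> V"
    then show "graph_lap nb (\<lambda>i. Im (y i)) i = Im (graph_lap nb y r)"
      using Im_graph_lap[of nb y i] const by simp
  qed
  ultimately have harmonic: "graph_lap nb y i = 0" if "i \<in> V" for i
    using const[OF that] by (simp add: complex_eqI)
  show ?thesis by (rule harmonic_const[OF V nb harmonic r root k])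
qed

section \<open>Roots and oriented spanning trees\<close>

definition hop_dist :: "('a \<times> 'a) set \<Rightarrow> 'a \<Rightarrow> 'a \<Rightarrow> nat" where
  "hop_dist R v r = (LEAST n. (v, r) \<in> R ^^ n)"

lemma hop_dist_next_hop:
  assumes "(v, r) \<in> R\<^sup>+" "v \<noteq> r"
  shows "\<exists>y. (v, y) \<in> R \<and> (y = r \<or> (y, r) \<in> R\<^sup>+) \<and> hop_dist R y r < hop_dist R v r"
proof -
  obtain n where "(v, r) \<in> R ^^ n" using assms(1) unfolding trancl_power by blast
  then have dv: "(v, r) \<in> R ^^ hop_dist R v r" unfolding hop_dist_def by (rule LeastI)
  then obtain m where m: "hop_dist R v r = Suc m" using assms(2) by (cases "hop_dist R v r") auto
  obtain y where y: "(v, y) \<in> R" "(y, r) \<in> R ^^ m"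
    using relpow_Suc_D2[OF dv[unfolded m]] by blast
  have "hop_dist R y r \<le> m" unfolding hop_dist_def by (rule Least_le) (rule y(2))
  moreover have "y = r \<or> (y, r) \<in> R\<^sup>+"
  proof (cases "m = 0")
    case True
    then show ?thesis using y(2) by simp
  next
    case False
    then have "0 < m" by simp
    then show ?thesis using y(2) unfolding trancl_power by blast
  qed
  ultimately show ?thesis using y(1) m by (intro exI[of _ y]) simp
qed

text \<open>T joins every vertex to the next vertex of a shortest path to the root; the hop distance
  strictly decreases along T, so T is acyclic.\<close>

lemma has_oriented_spanning_tree_if_root:
  assumes r: "r \<in> V" and root: "\<forall>v\<in>V. v \<noteq> r \<longrightarrow> (v, r) \<in> R\<^sup>+"
  shows "has_oriented_spanning_tree V R"
proof -
  define d where "d v = hop_dist R v r" for v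
  define D where "D = {v. v \<noteq> r \<and> (v, r) \<in> R\<^sup>+}"
  define next_hop where
    "next_hop v = (SOME y. (v, y) \<in> R \<and> (y = r \<or> (y, r) \<in> R\<^sup>+) \<and> d y < d v)" for v
  define T where "T = {(v, next_hop v) | v. v \<in> D}"
  have hop: "(v, next_hop v) \<in> R \<and> (next_hop v = r \<or> next_hop v \<in> D) \<and> d (next_hop v) < d v"
    if "v \<in> D" for v
  proof -
    have "(v, r) \<in> R\<^sup>+" "v \<noteq> r" using that unfolding D_def by simp_all
    then have "\<exists>y. (v, y) \<in> R \<and> (y = r \<or> (y, r) \<in> R\<^sup>+) \<and> d y < d v"
      unfolding d_def by (rule hop_dist_next_hop)
    then have "(v, next_hop v) \<in> R \<and> (next_hop v = r \<or> (next_hop v, r) \<in> R\<^sup>+) \<and> d (next_hop v) < d v"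
      unfolding next_hop_def by (rule someI_ex)
    then show ?thesis unfolding D_def by auto
  qed
  have T_hop: "a \<in> D \<and> b = next_hop a" if "(a, b) \<in> T" for a b
    using that unfolding T_def by blast
  have descent: "d b < d a" if "(a, b) \<in> T\<^sup>+" for a b
    using that
  proof (induction rule: trancl_induct)
    case (base b)
    then show ?case using T_hop hop by blast
  next
    case (step b c)
    then have "d c < d b" using T_hop hop by blast
    then show ?case using step.IH by (rule order.strict_trans)
  qed
  have "(v, r) \<in> T\<^sup>+" if "v \<in> D" for v
    using that
  proof (induction "d v" arbitrary: v rule: less_induct)
    case less
    have "(v, next_hop v) \<in> T" using less.prems unfolding T_def by blast
    then show ?case using hop[OF less.prems] less.hyps by (meson trancl.r_into_trancl trancl_into_trancl2)
  qed
  moreover have "T \<subseteq> R" using T_hop hop by auto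
  moreover have "acyclic T" unfolding acyclic_def using descent by blast
  ultimately show ?thesis
    unfolding has_oriented_spanning_tree_def D_def using r root by blast
qed

lemma has_oriented_spanning_tree_iff_root:
  "has_oriented_spanning_tree V R \<longleftrightarrow> (\<exists>r\<in>V. \<forall>v\<in>V. v \<noteq> r \<longrightarrow> (v, r) \<in> R\<^sup>+)"
proof
  assume "has_oriented_spanning_tree V R"
  then obtain r T where "r \<in> V" "T \<subseteq> R" "\<forall>v\<in>V. v \<noteq> r \<longrightarrow> (v, r) \<in> T\<^sup>+"
    unfolding has_oriented_spanning_tree_def by blast
  then show "\<exists>r\<in>V. \<forall>v\<in>V. v \<noteq> r \<longrightarrow> (v, r) \<in> R\<^sup>+"
    using trancl_mono[of _ T R] by blast
next
  assume "\<exists>r\<in>V. \<forall>v\<in>V. v \<noteq> r \<longrightarrow> (v, r) \<in> R\<^sup>+"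
  then obtain r where "r \<in> V" "\<forall>v\<in>V. v \<noteq> r \<longrightarrow> (v, r) \<in> R\<^sup>+" by blast
  then show "has_oriented_spanning_tree V R" by (rule has_oriented_spanning_tree_if_root)
qed

lemma disjoint_closed_sets_if_no_root:
  assumes V: "finite V" "V \<noteq> {}" and R: "R `` V \<subseteq> V"
    and no_root: "\<not> (\<exists>r\<in>V. \<forall>v\<in>V. v \<noteq> r \<longrightarrow> (v, r) \<in> R\<^sup>+)"
  obtains C1 C2 where "C1 \<subseteq> V" "C2 \<subseteq> V" "C1 \<noteq> {}" "C2 \<noteq> {}" "C1 \<inter> C2 = {}"
    "R `` C1 \<subseteq> C1" "R `` C2 \<subseteq> C2"
proof -
  define reach where "reach v = R\<^sup>* `` {v}" for v
  have reach_sub: "reach v \<subseteq> V" if "v \<in> V" for v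
  proof -
    have "R\<^sup>* `` V = V" using R by (rule Image_closed_trancl)
    then show ?thesis unfolding reach_def using that by blast
  qed
  have reach_closed: "R `` reach v \<subseteq> reach v" for v
    unfolding reach_def by (auto intro: rtrancl_into_rtrancl)
  obtain v0 where v0: "v0 \<in> V" and least: "\<And>v. v \<in> V \<Longrightarrow> card (reach v0) \<le> card (reach v)"
    using ex_has_least_nat[of "\<lambda>v. v \<in> V" _ "\<lambda>v. card (reach v)"] V(2) by blast
  obtain v where v: "v \<in> V" "(v, v0) \<notin> R\<^sup>*"
    using no_root v0 by (meson rtranclD)
  have "reach v0 \<inter> reach v = {}"
  proof (rule ccontr)
    assume "reach v0 \<inter> reach v \<noteq> {}"
    then obtain c where c: "(v0, c) \<in> R\<^sup>*" "(v, c) \<in> R\<^sup>*" unfolding reach_def by blast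
    then have sub: "reach c \<subseteq> reach v0" unfolding reach_def by (auto intro: rtrancl_trans)
    have fin: "finite (reach v0)" using reach_sub[OF v0] V(1) finite_subset by blast
    have "c \<in> V" using c(1) reach_sub[OF v0] unfolding reach_def by blast
    then have "reach c = reach v0" using card_subset_eq[OF fin sub] least card_mono[OF fin sub] by fastforce
    then have "(c, v0) \<in> R\<^sup>*" unfolding reach_def by blast
    then show False using c(2) v(2) by (meson rtrancl_trans)
  qed
  moreover have "v \<in> reach v" "v0 \<in> reach v0" unfolding reach_def by blast+
  ultimately show ?thesis
    using that[OF reach_sub[OF v0] reach_sub[OF v(1)]] reach_closed by blast
qed

section \<open>Kernels and Jordan blocks\<close>

lemma mult_mat_vec_index_sum:
  assumes "A \<in> carrier_mat m n" "v \<in> carrier_vec n" "k < m"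
  shows "(A *\<^sub>v v) $ k = (\<Sum>j<n. A $$ (k, j) * v $ j)"
  using assms by (auto simp: mult_mat_vec_def scalar_prod_def lessThan_atLeast0 intro!: sum.cong)

lemma transpose_mult_vec_index_sum:
  assumes "A \<in> carrier_mat m n" "w \<in> carrier_vec m" "j < n"
  shows "(transpose_mat A *\<^sub>v w) $ j = (\<Sum>k<m. A $$ (k, j) * w $ k)"
proof -
  have "(transpose_mat A *\<^sub>v w) $ j = (\<Sum>k<m. transpose_mat A $$ (j, k) * w $ k)"
    using assms by (intro mult_mat_vec_index_sum) auto
  also have "\<dots> = (\<Sum>k<m. A $$ (k, j) * w $ k)"
    using assms by (intro sum.cong) auto
  finally show ?thesis .
qed

lemma kernel_dim_le_1_if_spanned:
  fixes A :: "'a::field mat"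
  assumes A: "A \<in> carrier_mat n n" and z: "z \<in> mat_kernel A"
    and spanned: "\<And>x. x \<in> mat_kernel A \<Longrightarrow> \<exists>c. x = c \<cdot>\<^sub>v z"
  shows "kernel_dim A \<le> 1"
proof -
  interpret K: kernel n n A by (unfold_locales, rule A)
  have zc: "z \<in> carrier_vec n" using z mat_kernel_carrier A by blast
  have span_eq: "K.Ker.span {z} = K.NC.span {z}" using z by (intro K.span_same) auto
  have "mat_kernel A \<subseteq> K.Ker.span {z}"
  proof
    fix x assume "x \<in> mat_kernel A"
    then obtain c where xc: "x = c \<cdot>\<^sub>v z" using spanned by blast
    have "z \<in> K.NC.span {z}" using zc by (intro K.NC.span_self) simp
    then have "c \<cdot>\<^sub>v z \<in> K.NC.span {z}" using zc by (intro K.NC.smult_in_span) auto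
    then show "x \<in> K.Ker.span {z}" using xc span_eq by simp
  qed
  then have "K.Ker.span {z} = mat_kernel A" using z K.Ker.span_is_subset2[of "{z}"] by auto
  then have "card {z} \<ge> K.Ker.dim" by (intro K.Ker.gen_ge_dim) (use z in auto)
  then show ?thesis by simp
qed

lemma kernel_dim_ge_2_if_separated:
  fixes A :: "'a::field mat"
  assumes A: "A \<in> carrier_mat n n" and w: "w1 \<in> mat_kernel A" "w2 \<in> mat_kernel A"
    and i: "i1 < n" "i2 < n" "w1 $ i1 \<noteq> 0" "w2 $ i1 = 0" "w2 $ i2 \<noteq> 0" "w1 $ i2 = 0"
  shows "kernel_dim A \<ge> 2"
proof -
  interpret K: kernel n n A by (unfold_locales, rule A)
  have wc: "w1 \<in> carrier_vec n" "w2 \<in> carrier_vec n" using w mat_kernel_carrier A by blast+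
  have ne: "w1 \<noteq> w2" using i by auto
  have indep: "\<not> K.NC.lin_dep {w1, w2}"
  proof
    assume "K.NC.lin_dep {w1, w2}"
    then obtain U a u where U: "finite U" "U \<subseteq> {w1, w2}" "K.NC.lincomb a U = 0\<^sub>v n"
      "u \<in> U" "a u \<noteq> 0"
      unfolding K.NC.lin_dep_def by auto
    have Uc: "U \<subseteq> carrier_vec n" using U(2) wc by auto
    have coord: "(\<Sum>x\<in>U. a x * x $ j) = 0" if "j < n" for j
    proof -
      have "K.NC.lincomb a U $ j = 0" using U(3) that by simp
      then show ?thesis using K.NC.lincomb_index[OF that Uc, of a] by simp
    qed
    have "a w1 = 0" if "w1 \<in> U"
    proof -
      have "(\<Sum>x\<in>U. a x * x $ i1) = (\<Sum>x\<in>U. if x = w1 then a w1 * w1 $ i1 else 0)"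
        using U(2) i(4) by (intro sum.cong) auto
      also have "\<dots> = a w1 * w1 $ i1" using U(1) that by simp
      finally show ?thesis using coord[OF i(1)] i(3) by simp
    qed
    moreover have "a w2 = 0" if "w2 \<in> U"
    proof -
      have "(\<Sum>x\<in>U. a x * x $ i2) = (\<Sum>x\<in>U. if x = w2 then a w2 * w2 $ i2 else 0)"
        using U(2) i(6) by (intro sum.cong) auto
      also have "\<dots> = a w2 * w2 $ i2" using U(1) that by simp
      finally show ?thesis using coord[OF i(2)] i(5) by simp
    qed
    ultimately show False using U(2,4,5) by blast
  qed
  have sub: "{w1, w2} \<subseteq> mat_kernel A" using w by auto
  obtain B where "finite B" "K.Ker.basis B" using kernel_basis_exists[OF A] by blast
  then have "K.Ker.fin_dim" unfolding K.Ker.fin_dim_def K.Ker.basis_def by blast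
  moreover have "\<not> K.Ker.lin_dep {w1, w2}" using indep K.lindep_same[OF sub] by simp
  ultimately have "card {w1, w2} \<le> K.Ker.dim" using K.Ker.li_le_dim(2)[OF _ sub] by blast
  then show ?thesis using ne by simp
qed

text \<open>The matrix B agrees with A on the rows in C and with the identity elsewhere; it kills u,
  so its transpose has a null vector, which is supported on C and lies in the left kernel of A.\<close>

lemma left_null_vector_on_closed_set:
  fixes A :: "'a::field mat"
  assumes A: "A \<in> carrier_mat n n"
    and closed: "\<And>k j. k \<in> C \<Longrightarrow> j < n \<Longrightarrow> j \<notin> C \<Longrightarrow> A $$ (k, j) = 0"
    and u: "u \<in> carrier_vec n" "u \<noteq> 0\<^sub>v n" "\<And>j. j < n \<Longrightarrow> j \<notin> C \<Longrightarrow> u $ j = 0"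
    and Au: "\<And>k. k \<in> C \<Longrightarrow> k < n \<Longrightarrow> (A *\<^sub>v u) $ k = 0"
  shows "\<exists>w. w \<in> mat_kernel (transpose_mat A) \<and> w \<noteq> 0\<^sub>v n \<and> (\<forall>j<n. j \<notin> C \<longrightarrow> w $ j = 0)"
proof -
  define B where "B = mat n n (\<lambda>(k, j). if k \<in> C then A $$ (k, j) else if k = j then 1 else 0)"
  have B: "B \<in> carrier_mat n n" "transpose_mat B \<in> carrier_mat n n" unfolding B_def by simp_all
  have "B *\<^sub>v u = 0\<^sub>v n"
  proof (rule eq_vecI)
    fix k assume "k < dim_vec (0\<^sub>v n :: 'a vec)"
    then have k: "k < n" by simp
    have "(B *\<^sub>v u) $ k = (\<Sum>j<n. B $$ (k, j) * u $ j)" by (rule mult_mat_vec_index_sum[OF B(1) u(1) k])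
    also have "\<dots> = (if k \<in> C then (A *\<^sub>v u) $ k else u $ k)"
      using k by (simp add: B_def mult_mat_vec_index_sum[OF A u(1) k] if_distrib[of "\<lambda>x. x * _"]
          sum.delta' cong: if_cong)
    also have "\<dots> = 0" using Au u(3) k by simp
    finally show "(B *\<^sub>v u) $ k = 0\<^sub>v n $ k" using k by simp
  qed (use B in simp)
  then have "det B = 0" using u unfolding det_0_iff_vec_prod_zero[OF B(1)] by blast
  then have "det (transpose_mat B) = 0" by (simp add: det_transpose[OF B(1)])
  then obtain w where w: "w \<in> carrier_vec n" "w \<noteq> 0\<^sub>v n" "transpose_mat B *\<^sub>v w = 0\<^sub>v n"
    unfolding det_0_iff_vec_prod_zero[OF B(2)] by blast
  have col: "(\<Sum>k<n. B $$ (k, j) * w $ k) = 0" if "j < n" for j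
    using w(3) transpose_mult_vec_index_sum[OF B(1) w(1) that] that by simp
  have w_out: "w $ j = 0" if j: "j < n" "j \<notin> C" for j
  proof -
    have "(\<Sum>k<n. B $$ (k, j) * w $ k) = (\<Sum>k<n. if k = j then w $ k else 0)"
      using j closed by (intro sum.cong) (auto simp: B_def)
    then show ?thesis using col[OF j(1)] j(1) by simp
  qed
  have "transpose_mat A *\<^sub>v w = 0\<^sub>v n"
  proof (rule eq_vecI)
    fix j assume "j < dim_vec (0\<^sub>v n :: 'a vec)"
    then have j: "j < n" by simp
    have "(transpose_mat A *\<^sub>v w) $ j = (\<Sum>k<n. A $$ (k, j) * w $ k)"
      by (rule transpose_mult_vec_index_sum[OF A w(1) j])
    also have "\<dots> = (\<Sum>k<n. B $$ (k, j) * w $ k)"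
      using j w_out by (intro sum.cong) (auto simp: B_def)
    also have "\<dots> = 0" by (rule col[OF j])
    finally show "(transpose_mat A *\<^sub>v w) $ j = 0\<^sub>v n $ j" using j by simp
  qed (use A in simp)
  then show ?thesis using w(1,2) w_out A by (auto simp: mat_kernel_def)
qed

lemma jordan_block_sizes:
  fixes A :: "complex mat"
  assumes A: "A \<in> carrier_mat n n"
  obtains ns where "order ev (char_poly A) = sum_list ns"
    "\<And>k. dim_gen_eigenspace A ev k = sum_list (map (min k) ns)"
proof -
  obtain as where "char_poly A = (\<Prod>a\<leftarrow>as. [:- a, 1:])" using char_poly_factorized[OF A] by blast
  from jordan_nf_exists[OF A this] obtain n_as where jnf: "jordan_nf A n_as" ..
  have "[(n, e)\<leftarrow>n_as . e = ev] = filter (\<lambda>na. snd na = ev) n_as"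
    by (induction n_as) auto
  then show ?thesis
    using that jordan_nf_order[OF jnf, of ev] dim_gen_eigenspace[OF jnf, of ev]
    by (simp add: o_def)
qed

lemma order_char_poly_le_1:
  fixes A :: "complex mat"
  assumes "A \<in> carrier_mat n n" "dim_gen_eigenspace A ev 2 \<le> 1"
  shows "order ev (char_poly A) \<le> 1"
proof -
  obtain ns where ns: "order ev (char_poly A) = sum_list ns"
    "\<And>k. dim_gen_eigenspace A ev k = sum_list (map (min k) ns)"
    using jordan_block_sizes[OF assms(1)] by blast
  have "sum_list (map (min 2) ns) \<le> 1 \<Longrightarrow> sum_list ns = sum_list (map (min 2) ns)"
    by (induction ns) auto
  then show ?thesis using ns assms(2) by simp
qed

lemma dim_eigenspace_le_order_char_poly:
  fixes A :: "complex mat"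
  assumes "A \<in> carrier_mat n n"
  shows "dim_gen_eigenspace A ev 1 \<le> order ev (char_poly A)"
proof -
  obtain ns where ns: "order ev (char_poly A) = sum_list ns"
    "\<And>k. dim_gen_eigenspace A ev k = sum_list (map (min k) ns)"
    using jordan_block_sizes[OF assms] by blast
  have "sum_list (map (min 1) ns) \<le> sum_list ns"
    by (induction ns) auto
  then show ?thesis using ns by simp
qed

lemma dim_gen_eigenspace_0:
  assumes "A \<in> carrier_mat n n"
  shows "dim_gen_eigenspace A 0 k = kernel_dim (A ^\<^sub>m k)"
proof -
  have "char_matrix A 0 = A" unfolding char_matrix_def using assms by auto
  then show ?thesis unfolding dim_gen_eigenspace_def by simp
qed

section \<open>Laplacians twisted by unit phases\<close>

lemma Re_neg_if_norm_add_le: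
  fixes ev :: complex
  assumes "cmod (ev + of_real d) \<le> d" "ev \<noteq> 0"
  shows "Re ev < 0"
proof -
  have "0 \<le> d" using assms(1) norm_ge_zero order.trans by blast
  have "(Re ev + d)\<^sup>2 + (Im ev)\<^sup>2 = (cmod (ev + of_real d))\<^sup>2" by (simp add: cmod_power2)
  also have "\<dots> \<le> d\<^sup>2" using assms(1) by (simp add: power_mono)
  finally have "(Re ev)\<^sup>2 + (Im ev)\<^sup>2 + 2 * d * Re ev \<le> 0"
    by (simp add: power2_eq_square algebra_simps)
  moreover have "0 < (Re ev)\<^sup>2 + (Im ev)\<^sup>2" using assms(2) complex_neq_0 by blast
  ultimately have "d * Re ev < 0" by simp
  then show ?thesis using \<open>0 \<le> d\<close> by (simp add: mult_less_0_iff)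
qed

text \<open>H is the negated Laplacian of the graph with out-neighbourhoods nb, twisted by the unit phases
  c k j; the gauge condition says that diag z conjugates it back to the untwisted Laplacian.\<close>

locale gauge_laplacian =
  fixes M :: nat and nb :: "nat \<Rightarrow> nat set" and c :: "nat \<Rightarrow> nat \<Rightarrow> complex"
    and z :: "nat \<Rightarrow> complex" and H :: "complex mat"
  assumes H_def: "H = mat M M (\<lambda>(k, j). if k = j then - of_nat (card (nb k))
                     else if j \<in> nb k then c k j else 0)"
    and nb_subset: "k < M \<Longrightarrow> nb k \<subseteq> {..<M}"
    and nb_irrefl: "k < M \<Longrightarrow> k \<notin> nb k"
    and gauge: "k < M \<Longrightarrow> j \<in> nb k \<Longrightarrow> c k j * z j = z k"
    and norm_z: "cmod (z k) = 1"
begin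

lemma H_carrier: "H \<in> carrier_mat M M"
  unfolding H_def by simp

lemma z_nonzero: "z k \<noteq> 0"
  using norm_z[of k] by auto

lemma norm_c: "k < M \<Longrightarrow> j \<in> nb k \<Longrightarrow> cmod (c k j) = 1"
proof -
  assume "k < M" "j \<in> nb k"
  then have "cmod (c k j) * cmod (z j) = cmod (z k)" unfolding norm_mult[symmetric] using gauge by simp
  then show ?thesis using norm_z by simp
qed

lemma H_mult_vec_index:
  assumes k: "k < M" and v: "v \<in> carrier_vec M"
  shows "(H *\<^sub>v v) $ k = - of_nat (card (nb k)) * v $ k + (\<Sum>j\<in>nb k. c k j * v $ j)"
proof -
  have "(H *\<^sub>v v) $ k = (\<Sum>j<M. H $$ (k, j) * v $ j)"
    by (rule mult_mat_vec_index_sum[OF H_carrier v k])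
  also have "\<dots> = (\<Sum>j<M. (if j = k then - of_nat (card (nb k)) * v $ k else 0)
                        + (if j \<in> nb k then c k j * v $ j else 0))"
    using k nb_irrefl[OF k] by (intro sum.cong) (auto simp: H_def)
  also have "\<dots> = - of_nat (card (nb k)) * v $ k + (\<Sum>j\<in>{..<M} \<inter> nb k. c k j * v $ j)"
    using k by (simp add: sum.distrib sum.inter_restrict)
  also have "{..<M} \<inter> nb k = nb k" using nb_subset[OF k] by blast
  finally show ?thesis .
qed

lemma H_mult_gauge:
  "H *\<^sub>v vec M (\<lambda>i. z i * y i) = vec M (\<lambda>k. z k * graph_lap nb y k)"
proof (rule eq_vecI)
  fix k assume "k < dim_vec (vec M (\<lambda>k. z k * graph_lap nb y k))"
  then have k: "k < M" by simp
  have "(H *\<^sub>v vec M (\<lambda>i. z i * y i)) $ k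
      = - of_nat (card (nb k)) * (z k * y k) + (\<Sum>j\<in>nb k. c k j * (z j * y j))"
    using H_mult_vec_index[OF k] k nb_subset[OF k] by (auto intro!: sum.cong)
  also have "(\<Sum>j\<in>nb k. c k j * (z j * y j)) = (\<Sum>j\<in>nb k. z k * y j)"
    by (intro sum.cong) (auto simp: gauge[OF k, symmetric] mult.assoc)
  also have "- of_nat (card (nb k)) * (z k * y k) + (\<Sum>j\<in>nb k. z k * y j) = z k * graph_lap nb y k"
    unfolding graph_lap_def by (simp add: sum_subtractf sum_distrib_left algebra_simps)
  finally show "(H *\<^sub>v vec M (\<lambda>i. z i * y i)) $ k = vec M (\<lambda>k. z k * graph_lap nb y k) $ k"
    using k by simp
qed (use H_carrier in simp)

lemma H_mult_z: "H *\<^sub>v vec M z = 0\<^sub>v M"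
  using H_mult_gauge[of "\<lambda>_. 1"] by (simp add: graph_lap_def zero_vec_def)

lemma eigenvector_z_iff: "eigenvector H (vec M z) 0 \<longleftrightarrow> 0 < M"
proof -
  have "vec M z \<noteq> 0\<^sub>v M \<longleftrightarrow> 0 < M"
  proof
    assume "0 < M"
    then have "vec M z $ 0 \<noteq> 0\<^sub>v M $ 0" using z_nonzero by simp
    then show "vec M z \<noteq> 0\<^sub>v M" by metis
  next
    have "vec 0 z = 0\<^sub>v 0" by (rule eq_vecI) simp_all
    then show "0 < M" if "vec M z \<noteq> 0\<^sub>v M" using that by (cases M) simp_all
  qed
  moreover have "H *\<^sub>v vec M z = 0 \<cdot>\<^sub>v vec M z" using H_mult_z by auto
  ultimately show ?thesis unfolding eigenvector_def using H_carrier by auto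
qed

text \<open>Gershgorin: at a coordinate of maximal modulus, the eigenvalue equation puts ev into the
  disc of radius card (nb k) around - card (nb k).\<close>

lemma eigenvalue_Re_neg:
  assumes "eigenvalue H ev" "ev \<noteq> 0"
  shows "Re ev < 0"
proof -
  obtain v where v: "v \<in> carrier_vec M" "v \<noteq> 0\<^sub>v M" "H *\<^sub>v v = ev \<cdot>\<^sub>v v"
    using assms(1) H_carrier unfolding eigenvalue_def eigenvector_def by auto
  have "\<exists>i<M. v $ i \<noteq> 0"
  proof (rule ccontr)
    assume "\<not> (\<exists>i<M. v $ i \<noteq> 0)"
    then have "v = 0\<^sub>v M" using v(1) by (intro eq_vecI) auto
    then show False using v(2) by contradiction
  qed
  then obtain i where i: "i < M" "v $ i \<noteq> 0" by blast
  obtain k where k: "k \<in> {..<M}" and max: "\<forall>j\<in>{..<M}. cmod (v $ j) \<le> cmod (v $ k)"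
    using finite_has_max[of "{..<M}" "\<lambda>j. cmod (v $ j)"] i(1) by blast
  have "0 < cmod (v $ i)" "cmod (v $ i) \<le> cmod (v $ k)" using i max by simp_all
  then have vk: "0 < cmod (v $ k)" by linarith
  have "ev * v $ k = - of_nat (card (nb k)) * v $ k + (\<Sum>j\<in>nb k. c k j * v $ j)"
    using H_mult_vec_index[of k v] v k by simp
  then have "(ev + of_nat (card (nb k))) * v $ k = (\<Sum>j\<in>nb k. c k j * v $ j)"
    by (simp add: algebra_simps)
  then have "cmod (ev + of_nat (card (nb k))) * cmod (v $ k) = cmod (\<Sum>j\<in>nb k. c k j * v $ j)"
    unfolding norm_mult[symmetric] by simp
  also have "\<dots> \<le> (\<Sum>j\<in>nb k. cmod (c k j * v $ j))" by (rule norm_sum)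
  also have "\<dots> = (\<Sum>j\<in>nb k. cmod (v $ j))"
    using k by (intro sum.cong) (auto simp: norm_mult norm_c)
  also have "\<dots> \<le> (\<Sum>j\<in>nb k. cmod (v $ k))" using max nb_subset k by (intro sum_mono) auto
  also have "\<dots> = of_nat (card (nb k)) * cmod (v $ k)" by simp
  finally have "cmod (ev + of_real (of_nat (card (nb k)))) \<le> of_nat (card (nb k))"
    using vk by simp
  then show ?thesis using Re_neg_if_norm_add_le assms(2) by blast
qed

lemma kernel_H_sq_spanned_by_z:
  assumes r: "r \<in> {..<M}"
    and root: "\<And>v. v \<in> {..<M} \<Longrightarrow> v \<noteq> r \<Longrightarrow> (v, r) \<in> {(a, b). b \<in> nb a}\<^sup>+"
    and x: "x \<in> mat_kernel (H * H)"
  shows "\<exists>a. x = a \<cdot>\<^sub>v vec M z"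
proof -
  have HH: "H * H \<in> carrier_mat M M" using H_carrier by simp
  note x_carrier = mat_kernelD(1)[OF HH x] and Hx = mat_kernelD(2)[OF HH x]
  define y where "y i = cnj (z i) * x $ i" for i
  have "z i * cnj (z i) = 1" for i
    using complex_norm_square[of "z i"] norm_z[of i] by simp
  then have xy: "x = vec M (\<lambda>i. z i * y i)"
    using x_carrier unfolding y_def by (intro eq_vecI) (auto simp: mult.assoc[symmetric])
  have "vec M (\<lambda>k. z k * graph_lap nb (graph_lap nb y) k) = (H * H) *\<^sub>v x"
    unfolding xy by (simp add: assoc_mult_mat_vec[OF H_carrier H_carrier] H_mult_gauge)
  then have vec0: "vec M (\<lambda>k. z k * graph_lap nb (graph_lap nb y) k) = 0\<^sub>v M"
    using Hx by simp
  have "graph_lap nb (graph_lap nb y) k = 0" if "k \<in> {..<M}" for k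
    using arg_cong[OF vec0, of "\<lambda>v. v $ k"] that z_nonzero[of k] by simp
  then have "y k = y r" if "k \<in> {..<M}" for k
    using biharmonic_const[OF finite_lessThan _ _ r root that] nb_subset by simp
  then have "x = y r \<cdot>\<^sub>v vec M z"
    unfolding xy by (intro eq_vecI) (auto simp: mult.commute)
  then show ?thesis by blast
qed

lemma order_0_eq_1_if_root:
  assumes r: "r \<in> {..<M}"
    and root: "\<And>v. v \<in> {..<M} \<Longrightarrow> v \<noteq> r \<Longrightarrow> (v, r) \<in> {(a, b). b \<in> nb a}\<^sup>+"
  shows "order 0 (char_poly H) = 1"
proof -
  have HH: "H * H \<in> carrier_mat M M" using H_carrier by simp
  have "(H * H) *\<^sub>v vec M z = H *\<^sub>v (H *\<^sub>v vec M z)"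
    by (rule assoc_mult_mat_vec) (use H_carrier in auto)
  also have "\<dots> = 0\<^sub>v M" using H_carrier by (auto simp: H_mult_z)
  finally have "vec M z \<in> mat_kernel (H * H)" by (intro mat_kernelI[OF HH]) simp_all
  then have "kernel_dim (H * H) \<le> 1"
    by (rule kernel_dim_le_1_if_spanned[OF HH _ kernel_H_sq_spanned_by_z[OF r root]])
  then have "order 0 (char_poly H) \<le> 1"
    using order_char_poly_le_1[OF H_carrier, of 0]
    by (simp add: dim_gen_eigenspace_0[OF H_carrier] numeral_2_eq_2)
  moreover have "eigenvalue H 0"
    using eigenvector_z_iff r unfolding eigenvalue_def by auto
  then have "poly (char_poly H) 0 = 0" using eigenvalue_root_char_poly[OF H_carrier] by simp
  moreover have "char_poly H \<noteq> 0" using degree_monic_char_poly[OF H_carrier] by auto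
  ultimately show ?thesis by (simp add: order_root)
qed

lemma left_null_vector_of_closed_set:
  assumes C: "C \<subseteq> {..<M}" "C \<noteq> {}" and closed: "\<And>k. k \<in> C \<Longrightarrow> nb k \<subseteq> C"
  shows "\<exists>w. w \<in> mat_kernel (transpose_mat H) \<and> w \<noteq> 0\<^sub>v M \<and> (\<forall>j<M. j \<notin> C \<longrightarrow> w $ j = 0)"
proof -
  define u where "u = vec M (\<lambda>i. z i * of_bool (i \<in> C))"
  have u_carrier: "u \<in> carrier_vec M" and u_out: "\<And>j. j < M \<Longrightarrow> j \<notin> C \<Longrightarrow> u $ j = 0"
    unfolding u_def by simp_all
  obtain k0 where k0: "k0 \<in> C" using C(2) by blast
  then have "u $ k0 \<noteq> 0" using C(1) z_nonzero unfolding u_def by auto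
  then have u_nonzero: "u \<noteq> 0\<^sub>v M" using k0 C(1) by auto
  have H_closed: "H $$ (k, j) = 0" if "k \<in> C" "j < M" "j \<notin> C" for k j
  proof -
    have "k < M" "k \<noteq> j" "j \<notin> nb k" using that C(1) closed[of k] by auto
    then show ?thesis using that(2) by (simp add: H_def)
  qed
  have Hu: "(H *\<^sub>v u) $ k = 0" if "k \<in> C" "k < M" for k
  proof -
    have "graph_lap nb (\<lambda>i. of_bool (i \<in> C)) k = (0::complex)"
      unfolding graph_lap_def using that closed by (intro sum.neutral) auto
    then show ?thesis unfolding u_def H_mult_gauge using that by simp
  qed
  show ?thesis
    by (rule left_null_vector_on_closed_set[OF H_carrier H_closed u_carrier u_nonzero u_out Hu])
qed

lemma order_0_ge_2_if_no_root:
  assumes M: "0 < M"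
    and no_root: "\<not> (\<exists>r\<in>{..<M}. \<forall>v\<in>{..<M}. v \<noteq> r \<longrightarrow> (v, r) \<in> {(a, b). b \<in> nb a}\<^sup>+)"
  shows "2 \<le> order 0 (char_poly H)"
proof -
  have "{(a, b). b \<in> nb a} `` {..<M} \<subseteq> {..<M}" using nb_subset by auto
  moreover have "{..<M} \<noteq> {}" using M by auto
  ultimately obtain C1 C2 where C: "C1 \<subseteq> {..<M}" "C2 \<subseteq> {..<M}" "C1 \<noteq> {}" "C2 \<noteq> {}" "C1 \<inter> C2 = {}"
    and "{(a, b). b \<in> nb a} `` C1 \<subseteq> C1" "{(a, b). b \<in> nb a} `` C2 \<subseteq> C2"
    using disjoint_closed_sets_if_no_root[OF finite_lessThan _ _ no_root] by blast
  then have closed: "\<And>k. k \<in> C1 \<Longrightarrow> nb k \<subseteq> C1" "\<And>k. k \<in> C2 \<Longrightarrow> nb k \<subseteq> C2" by blast+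
  have HT: "transpose_mat H \<in> carrier_mat M M" using H_carrier by simp
  have support: "\<exists>i<M. w $ i \<noteq> 0 \<and> i \<in> C"
    if "w \<in> mat_kernel (transpose_mat H)" "w \<noteq> 0\<^sub>v M" "\<forall>j<M. j \<notin> C \<longrightarrow> w $ j = 0" for w C
  proof (rule ccontr)
    assume "\<not> (\<exists>i<M. w $ i \<noteq> 0 \<and> i \<in> C)"
    then have "w = 0\<^sub>v M" using mat_kernelD(1)[OF HT that(1)] that(3) by (intro eq_vecI) auto
    then show False using that(2) by contradiction
  qed
  obtain w1 i1 where w1: "w1 \<in> mat_kernel (transpose_mat H)" "\<forall>j<M. j \<notin> C1 \<longrightarrow> w1 $ j = 0"
    and i1: "i1 < M" "w1 $ i1 \<noteq> 0" "i1 \<in> C1"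
    using left_null_vector_of_closed_set[OF C(1,3) closed(1)] support by meson
  obtain w2 i2 where w2: "w2 \<in> mat_kernel (transpose_mat H)" "\<forall>j<M. j \<notin> C2 \<longrightarrow> w2 $ j = 0"
    and i2: "i2 < M" "w2 $ i2 \<noteq> 0" "i2 \<in> C2"
    using left_null_vector_of_closed_set[OF C(2,4) closed(2)] support by meson
  have "w2 $ i1 = 0" "w1 $ i2 = 0" using w1(2) w2(2) i1 i2 C(5) by auto
  then have "2 \<le> kernel_dim (transpose_mat H)"
    using kernel_dim_ge_2_if_separated[OF HT w1(1) w2(1) i1(1) i2(1) i1(2) _ i2(2)] by blast
  also have "\<dots> \<le> order 0 (char_poly (transpose_mat H))"
    using dim_eigenspace_le_order_char_poly[OF HT, of 0] by (simp add: dim_gen_eigenspace_0[OF HT])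
  finally show ?thesis using char_poly_transpose_mat[OF H_carrier] by simp
qed

lemma simple_zero_eigenvalue_iff_root:
  "(eigenvector H (vec M z) 0 \<and> order 0 (char_poly H) = 1) \<longleftrightarrow>
   (\<exists>r\<in>{..<M}. \<forall>v\<in>{..<M}. v \<noteq> r \<longrightarrow> (v, r) \<in> {(a, b). b \<in> nb a}\<^sup>+)"
proof
  assume simple: "eigenvector H (vec M z) 0 \<and> order 0 (char_poly H) = 1"
  then have "0 < M" using eigenvector_z_iff by blast
  with simple show "\<exists>r\<in>{..<M}. \<forall>v\<in>{..<M}. v \<noteq> r \<longrightarrow> (v, r) \<in> {(a, b). b \<in> nb a}\<^sup>+"
    using order_0_ge_2_if_no_root by fastforce
next
  assume "\<exists>r\<in>{..<M}. \<forall>v\<in>{..<M}. v \<noteq> r \<longrightarrow> (v, r) \<in> {(a, b). b \<in> nb a}\<^sup>+"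
  then obtain r where r: "r \<in> {..<M}"
    and root: "\<And>v. v \<in> {..<M} \<Longrightarrow> v \<noteq> r \<Longrightarrow> (v, r) \<in> {(a, b). b \<in> nb a}\<^sup>+"
    by blast
  then show "eigenvector H (vec M z) 0 \<and> order 0 (char_poly H) = 1"
    using eigenvector_z_iff order_0_eq_1_if_root[OF r root] by auto
qed

end

section \<open>The localization interaction matrix\<close>

lemma loc_edge_agents:
  assumes S_agents: "\<forall>(u, w, v) \<in> S. u \<in> {1..N} \<and> w \<in> {1..N} \<and> v \<in> {1..N}
                       \<and> u \<noteq> w \<and> u \<noteq> v \<and> w \<noteq> v"
    and e: "e \<in> loc_edges S"
  shows "rho (fst e) \<in> {1..N} \<and> rho (snd e) \<in> {1..N} \<and> rho (fst e) \<noteq> rho (snd e)"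
proof -
  have comm: "x \<in> {1..N} \<and> y \<in> {1..N} \<and> x \<noteq> y" if "(x, y) \<in> comm_edges S" for x y
    using that S_agents unfolding comm_edges_def by fastforce
  show ?thesis
    using e unfolding loc_edges_def needs_virtual_def by (auto dest!: comm)
qed

lemma theta_jk_gauge:
  assumes distinct_pos: "inj_on p {1..N}"
    and S_agents: "\<forall>(u, w, v) \<in> S. u \<in> {1..N} \<and> w \<in> {1..N} \<and> v \<in> {1..N}
                       \<and> u \<noteq> w \<and> u \<noteq> v \<and> w \<noteq> v"
    and k: "lab k \<in> loc_edges S" and j: "lab j \<in> loc_edges S" and kj: "snd (lab k) = fst (lab j)"
  shows "cis (- theta_jk p lab j k) * cis (theta_e p lab j) = cis (theta_e p lab k)"
proof -
  define u v w where "u = rho (fst (lab k))" and "v = rho (snd (lab k))" and "w = rho (snd (lab j))"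
  have "u \<in> {1..N}" "v \<in> {1..N}" "w \<in> {1..N}" "u \<noteq> v" "w \<noteq> v"
    using loc_edge_agents[OF S_agents k] loc_edge_agents[OF S_agents j] kj
    unfolding u_def v_def w_def by auto
  then have "p u \<noteq> p v" "p w \<noteq> p v" using distinct_pos by (auto dest: inj_onD)
  then show ?thesis
    using cis_bearing_angle_transport[of p u v w] kj
    unfolding theta_jk_def theta_e_def u_def v_def w_def Let_def by simp
qed

lemma Hmat_gauge_laplacian:
  assumes distinct_pos: "inj_on p {1..N}"
    and S_agents: "\<forall>(u, w, v) \<in> S. u \<in> {1..N} \<and> w \<in> {1..N} \<and> v \<in> {1..N}
                       \<and> u \<noteq> w \<and> u \<noteq> v \<and> w \<noteq> v"
    and lab: "\<And>k. k < M \<Longrightarrow> lab k \<in> loc_edges S"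
  shows "gauge_laplacian M (lig_nbrs M lab) (\<lambda>k j. cis (- theta_jk p lab j k))
           (\<lambda>k. cis (theta_e p lab k)) (Hmat p M lab)"
proof
  fix k j
  show "k < M \<Longrightarrow> lig_nbrs M lab k \<subseteq> {..<M}"
    unfolding lig_nbrs_def lig_edges_def by auto
  show "k < M \<Longrightarrow> k \<notin> lig_nbrs M lab k"
    using loc_edge_agents[OF S_agents lab] unfolding lig_nbrs_def lig_edges_def by fastforce
  show "k < M \<Longrightarrow> j \<in> lig_nbrs M lab k \<Longrightarrow>
      cis (- theta_jk p lab j k) * cis (theta_e p lab j) = cis (theta_e p lab k)"
    using theta_jk_gauge[OF distinct_pos S_agents lab lab] unfolding lig_nbrs_def lig_edges_def by simp
qed (simp_all add: Hmat_def)

theorem theorem2: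
  fixes N M :: nat and p :: "nat \<Rightarrow> complex" and S :: "(nat \<times> nat \<times> nat) set"
    and lab :: "nat \<Rightarrow> vbar \<times> vbar"
  assumes distinct_pos: "inj_on p {1..N}"
    and S_agents: "\<forall>(u, w, v) \<in> S. u \<in> {1..N} \<and> w \<in> {1..N} \<and> v \<in> {1..N}
                       \<and> u \<noteq> w \<and> u \<noteq> v \<and> w \<noteq> v"
    and S_sym: "\<forall>u w v. (u, w, v) \<in> S \<longleftrightarrow> (u, v, w) \<in> S"
    and standing: "standing_assumption S"
    and connected: "\<forall>x \<in> {1..N}. \<forall>y \<in> {1..N}. (x, y) \<in> (comm_edges S)\<^sup>*"
    and M_def: "M = card (loc_edges S)"
    and lab_bij: "bij_betw lab {..<M} (loc_edges S)"
  shows "((eigenvector (Hmat p M lab) (zvec p M lab) 0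
            \<and> order 0 (char_poly (Hmat p M lab)) = 1)
          \<longleftrightarrow> has_oriented_spanning_tree {..<M} (lig_edges M lab))
       \<and> (\<forall>ev. eigenvalue (Hmat p M lab) ev \<and> ev \<noteq> 0 \<longrightarrow> Re ev < 0)"
proof -
  have "lab k \<in> loc_edges S" if "k < M" for k
    using lab_bij that unfolding bij_betw_def by auto
  then interpret gauge_laplacian M "lig_nbrs M lab" "\<lambda>k j. cis (- theta_jk p lab j k)"
      "\<lambda>k. cis (theta_e p lab k)" "Hmat p M lab"
    by (rule Hmat_gauge_laplacian[OF distinct_pos S_agents])
  have "{(a, b). b \<in> lig_nbrs M lab a} = lig_edges M lab"
    unfolding lig_nbrs_def by auto
  then have "(eigenvector (Hmat p M lab) (zvec p M lab) 0 \<and> order 0 (char_poly (Hmat p M lab)) = 1)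
      \<longleftrightarrow> has_oriented_spanning_tree {..<M} (lig_edges M lab)"
    using simple_zero_eigenvalue_iff_root
    unfolding has_oriented_spanning_tree_iff_root zvec_def by simp
  then show ?thesis using eigenvalue_Re_neg by blast
qed

end
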